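(* There is an absolute constant $K$ such that for every integer $c \ge 0$ there is a deterministic finite automaton over the alphabet $\{0,1\}\times\{0,1\}$, reading its input most significant digit first, with at most $K\max(1,\log c)$ states (not counting a dead state), which accepts a word $x \times y$ (with $x,y$ valid Fibonacci representations of the same length) if and only if $[x] - c = [y]$.
   Context: Fibonacci numbers: $F_0=0$, $F_1=1$, $F_k=F_{k-1}+F_{k-2}$. For a binary word $x = x_1\cdots x_\ell$, $[x] = \sum_{j=1}^{\ell} x_j F_{\ell-j+2}$. A valid Fibonacci representation is a binary word with no factor $11$; leading zeros are allowed. For words $x,y$ of equal length, $x\times y$ denotes the word over $\{0,1\}^2$ whose first component is $x$ and second is $y$ (shorter representation padded with leading zeros). A dead state is not counted. *)

theory Defs
  imports Complex_Main "HOL-Number_Theory.Fib"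
begin

text \<open>Binary words are bool lists; the first letter is the most significant digit.
  The value of x_1...x_l is the sum of x_j F_{l-j+2} (1-indexed), i.e. with
  0-indexed position j the weight is F_{l-j+1}.\<close>

definition fibval :: "bool list \<Rightarrow> nat" where
  "fibval x = (\<Sum>j<length x. of_bool (x ! j) * fib (length x - j + 1))"

definition valid_fib :: "bool list \<Rightarrow> bool" where
  "valid_fib x \<longleftrightarrow> (\<forall>j. Suc j < length x \<longrightarrow> \<not> (x ! j \<and> x ! Suc j))"

text \<open>Deterministic finite automata over the alphabet {0,1} x {0,1}, with a partial
  transition function; a missing transition (None) means going to the (uncounted)
  dead state.\<close>
record dfa =
  states :: "nat set"
  init   :: nat
  trans  :: "nat \<Rightarrow> bool \<times> bool \<Rightarrow> nat option"
  final  :: "nat set"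

definition wf_dfa :: "dfa \<Rightarrow> bool" where
  "wf_dfa A \<longleftrightarrow> finite (states A) \<and> init A \<in> states A \<and> final A \<subseteq> states A \<and>
     (\<forall>q\<in>states A. \<forall>a. \<forall>q'. trans A q a = Some q' \<longrightarrow> q' \<in> states A)"

fun run :: "dfa \<Rightarrow> nat \<Rightarrow> (bool \<times> bool) list \<Rightarrow> nat option" where
  "run A q [] = Some q"
| "run A q (a # w) = (case trans A q a of None \<Rightarrow> None | Some q' \<Rightarrow> run A q' w)"

definition accepts :: "dfa \<Rightarrow> (bool \<times> bool) list \<Rightarrow> bool" where
  "accepts A w \<longleftrightarrow> (\<exists>q. run A (init A) w = Some q \<and> q \<in> final A)"

end

(*
  Read x \<times> y from the most significant digit and let p, q be the prefixes read so far.
  With [p]' the value of p when every digit is weighted by the next smaller Fibonacci number,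
  the pair (a, u) = ([p] - [q], [p]' - [q]') evolves by (a, u) \<mapsto> (a + u + d, a + d), where d is
  the difference of the two new digits, and the input must be accepted iff finally a = c.

  Since [p] - \<phi>[p]' always lies in (-\<phi>, \<phi>), we have |a - \<phi>u| < 2\<phi>. If [x] - c = [y] and m
  digits remain, then c = a F(m+1) + u F(m) + ([w] - [w']) for the valid suffixes w, w', whose
  values are below F(m+2). Using \<phi>^(m+1) = \<phi>F(m+1) + F(m), this places u within 3 of
  c/\<phi>^(m+1) and a within 9 of c/\<phi>^m. Once \<phi>^m > c all these boxes coincide, so on
  accepted inputs the pair never leaves O(log c) boxes of 19 \<times> 7 integer points each, and
  every other pair can be sent to the dead state.
*)
theory Submission
  imports Defs "HOL-Library.Countable"
begin

definition fibval_shift :: "bool list \<Rightarrow> nat" where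
  "fibval_shift x = (\<Sum>j<length x. of_bool (x ! j) * fib (length x - j))"

lemma fibval_Nil [simp]: "fibval [] = 0"
  and fibval_shift_Nil [simp]: "fibval_shift [] = 0"
  by (simp_all add: fibval_def fibval_shift_def)

lemma fibval_Cons: "fibval (e # x) = of_bool e * fib (length x + 2) + fibval x"
  unfolding fibval_def length_Cons sum.lessThan_Suc_shift
  by (simp del: of_bool_eq add: Suc_diff_le)

lemma fibval_shift_Cons: "fibval_shift (e # x) = of_bool e * fib (length x + 1) + fibval_shift x"
  unfolding fibval_shift_def length_Cons sum.lessThan_Suc_shift
  by (simp del: of_bool_eq add: Suc_diff_le)

lemma fibval_shift_snoc: "fibval_shift (x @ [e]) = fibval x + of_bool e"
  unfolding fibval_def fibval_shift_def
  by (auto simp: nth_append Suc_diff_le intro!: sum.cong)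

lemma fibval_snoc: "fibval (x @ [e]) = fibval x + fibval_shift x + of_bool e"
proof -
  have "fibval (x @ [e]) =
      (\<Sum>j<length x. of_bool (x ! j) * fib (Suc (Suc (length x - j)))) + of_bool e"
    unfolding fibval_def by (auto simp: nth_append Suc_diff_le intro!: sum.cong)
  then show ?thesis
    by (simp add: fibval_def fibval_shift_def sum.distrib distrib_left)
qed

lemma fibval_append:
  "fibval (p @ w) = fibval p * fib (length w + 1) + fibval_shift p * fib (length w) + fibval w"
proof (induction p)
  case (Cons e p)
  have "fib (length p + length w + 2) =
      fib (length p + 2) * fib (length w + 1) + fib (length p + 1) * fib (length w)"
    using fib_add[of "length w" "Suc (length p)"] by (simp add: algebra_simps)
  with Cons show ?case by (simp add: fibval_Cons fibval_shift_Cons algebra_simps)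
qed simp

lemma valid_fib_Cons_Cons [simp]:
  "valid_fib (a # b # w) \<longleftrightarrow> \<not> (a \<and> b) \<and> valid_fib (b # w)"
  unfolding valid_fib_def by (auto simp: less_Suc_eq_0_disj)

lemma valid_fib_drop: "valid_fib x \<Longrightarrow> valid_fib (drop k x)"
  unfolding valid_fib_def by (auto simp: add.commute)

lemma fibval_less_fib: "valid_fib w \<Longrightarrow> fibval w < fib (length w + 2)"
proof (induction w rule: induct_list012)
  case (3 a b w)
  then have "valid_fib w" using valid_fib_drop[of "b # w" 1] by simp
  with 3 show ?case
    by (cases a) (auto simp: fibval_Cons numeral_eq_Suc)
qed (simp_all add: fibval_Cons numeral_eq_Suc)

definition restricted_dfa ::
    "'s::countable set \<Rightarrow> 's \<Rightarrow> ('s \<Rightarrow> bool \<times> bool \<Rightarrow> 's) \<Rightarrow> ('s \<Rightarrow> bool) \<Rightarrow> dfa" where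
  "restricted_dfa S s0 \<delta> F =
     \<lparr> states = to_nat ` S, init = to_nat s0,
       trans = (\<lambda>q a. if \<delta> (from_nat q) a \<in> S then Some (to_nat (\<delta> (from_nat q) a)) else None),
       final = to_nat ` {s \<in> S. F s} \<rparr>"

lemma wf_restricted_dfa: "finite S \<Longrightarrow> s0 \<in> S \<Longrightarrow> wf_dfa (restricted_dfa S s0 \<delta> F)"
  unfolding wf_dfa_def restricted_dfa_def by auto

lemma card_states_restricted_dfa: "finite S \<Longrightarrow> card (states (restricted_dfa S s0 \<delta> F)) \<le> card S"
  unfolding restricted_dfa_def by (simp add: card_image_le)

lemma run_restricted_dfa:
  "s \<in> S \<Longrightarrow> run (restricted_dfa S s0 \<delta> F) (to_nat s) w =
     (if \<forall>i\<le>length w. foldl \<delta> s (take i w) \<in> S then Some (to_nat (foldl \<delta> s w)) else None)"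
proof (induction w arbitrary: s)
  case (Cons a w)
  have "(\<forall>i\<le>length (a # w). foldl \<delta> s (take i (a # w)) \<in> S) \<longleftrightarrow>
      \<delta> s a \<in> S \<and> (\<forall>i\<le>length w. foldl \<delta> (\<delta> s a) (take i w) \<in> S)"
    using Cons.prems by (simp only: length_Cons flip: less_Suc_eq_le) (simp add: All_less_Suc2)
  with Cons show ?case by (auto simp: restricted_dfa_def)
qed simp

lemma accepts_restricted_dfa:
  assumes "s0 \<in> S"
  shows "accepts (restricted_dfa S s0 \<delta> F) w \<longleftrightarrow>
    (\<forall>i\<le>length w. foldl \<delta> s0 (take i w) \<in> S) \<and> F (foldl \<delta> s0 w)"
  using run_restricted_dfa[OF assms, of s0 \<delta> F w] unfolding accepts_def
  by (auto simp: restricted_dfa_def)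

definition fib_diff_step :: "int \<times> int \<Rightarrow> bool \<times> bool \<Rightarrow> int \<times> int" where
  "fib_diff_step s ab = (let d = of_bool (fst ab) - of_bool (snd ab) in (fst s + snd s + d, fst s + d))"

lemma foldl_fib_diff_step:
  "length p = length q \<Longrightarrow> foldl fib_diff_step (0, 0) (zip p q) =
     (int (fibval p) - int (fibval q), int (fibval_shift p) - int (fibval_shift q))"
  by (induction p q rule: rev_induct2)
     (simp_all add: fib_diff_step_def fibval_snoc fibval_shift_snoc)

definition \<phi> :: real where
  "\<phi> = (1 + sqrt 5) / 2"

lemma golden_ratio_sq: "\<phi> * \<phi> = \<phi> + 1"
  unfolding \<phi>_def by (simp add: field_simps)

lemma golden_ratio_bounds: "1.6 < \<phi>" "\<phi> < 1.7"
proof -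
  have "2.2 < sqrt 5" by (rule real_less_rsqrt) (simp add: power2_eq_square)
  moreover have "sqrt 5 < 2.4"
    by (rule power_less_imp_less_base[of _ 2]) (auto simp: power2_eq_square)
  ultimately show "1.6 < \<phi>" "\<phi> < 1.7" unfolding \<phi>_def by auto
qed

lemma golden_ratio_pow_Suc: "\<phi> ^ Suc n = \<phi> * fib (Suc n) + fib n"
proof (induction n)
  case (Suc n)
  have "\<phi> ^ Suc (Suc n) = (\<phi> * \<phi>) * fib (Suc n) + \<phi> * fib n"
    using Suc by (simp add: algebra_simps)
  then show ?case by (simp add: golden_ratio_sq algebra_simps)
qed simp

lemma fib_Suc_le_golden_ratio_pow: "real (fib (Suc n)) \<le> \<phi> ^ n"
proof (induction n rule: fib.induct)
  case (3 n)
  have "real (fib (Suc (Suc (Suc n)))) \<le> \<phi> ^ Suc n + \<phi> ^ n"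
    using 3 by simp
  also have "\<dots> = \<phi> ^ n * (\<phi> * \<phi>)"
    by (simp add: golden_ratio_sq algebra_simps)
  finally show ?case by (simp add: algebra_simps)
qed (use golden_ratio_bounds in auto)

lemma golden_ratio_defect: "\<bar>real (fibval p) - \<phi> * real (fibval_shift p)\<bar> < \<phi>"
proof (induction p rule: rev_induct)
  case (snoc e p)
  define E where "E = real (fibval p) - \<phi> * real (fibval_shift p)"
  have "real (fibval (p @ [e])) - \<phi> * real (fibval_shift (p @ [e])) = (1 - \<phi>) * (E + of_bool e)"
    unfolding E_def fibval_snoc fibval_shift_snoc
    by (simp add: ring_distribs golden_ratio_sq flip: mult.assoc)
  also have "\<bar>\<dots>\<bar> \<le> (\<phi> - 1) * (\<bar>E\<bar> + 1)"
    using golden_ratio_bounds by (auto simp: abs_mult intro!: mult_left_mono)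
  also have "\<dots> < (\<phi> - 1) * (\<phi> + 1)"
    using golden_ratio_bounds snoc.IH unfolding E_def by (intro mult_strict_left_mono) auto
  also have "\<dots> = \<phi>"
    by (simp add: algebra_simps golden_ratio_sq)
  finally show ?case .
qed (use golden_ratio_bounds in simp)

lemma golden_ratio_pow_approx:
  fixes a u :: int and c :: real
  assumes defect: "\<bar>a - \<phi> * u\<bar> < 2 * \<phi>"
    and rest: "\<bar>c - (a * fib (m + 1) + u * fib m)\<bar> < fib (m + 2)"
  shows "\<bar>c / \<phi> ^ (m + 1) - u\<bar> < 3" and "\<bar>c / \<phi> ^ m - a\<bar> < 9"
proof -
  have pos: "0 < \<phi>" using golden_ratio_bounds by simp
  have "c - u * \<phi> ^ (m + 1) = (c - (a * fib (m + 1) + u * fib m)) + (a - \<phi> * u) * fib (m + 1)"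
    using golden_ratio_pow_Suc[of m] by (simp add: algebra_simps)
  also have "\<bar>\<dots>\<bar> \<le>
      \<bar>c - (a * fib (m + 1) + u * fib m)\<bar> + \<bar>a - \<phi> * u\<bar> * fib (m + 1)"
    by (metis abs_mult abs_of_nat abs_triangle_ineq)
  also have "\<dots> < fib (m + 2) + 2 * \<phi> * fib (m + 1)"
    using rest defect by (intro add_less_le_mono mult_right_mono) auto
  also have "\<dots> \<le> \<phi> ^ (m + 1) + 2 * \<phi> * \<phi> ^ m"
    using fib_Suc_le_golden_ratio_pow[of "m + 1"] fib_Suc_le_golden_ratio_pow[of m] pos
    by (intro add_mono mult_left_mono) auto
  finally have "\<bar>c - u * \<phi> ^ (m + 1)\<bar> < 3 * \<phi> ^ (m + 1)"
    by simp
  then show u: "\<bar>c / \<phi> ^ (m + 1) - u\<bar> < 3"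
    using pos by (simp add: abs_less_iff field_simps)
  have "c / \<phi> ^ m - a = \<phi> * (c / \<phi> ^ (m + 1) - u) + (\<phi> * u - a)"
    using pos by (simp add: field_simps)
  also have "\<bar>\<dots>\<bar> \<le> \<phi> * \<bar>c / \<phi> ^ (m + 1) - u\<bar> + \<bar>a - \<phi> * u\<bar>"
    using pos by (metis abs_minus_commute abs_mult abs_of_pos abs_triangle_ineq)
  also have "\<dots> < \<phi> * 3 + 2 * \<phi>"
    using u defect pos by (intro add_less_le_mono mult_strict_left_mono) auto
  finally show "\<bar>c / \<phi> ^ m - a\<bar> < 9"
    using golden_ratio_bounds by simp
qed

lemma mem_floor_interval:
  fixes r :: real and a k :: int
  assumes "\<bar>r - a\<bar> < k"
  shows "a \<in> {\<lfloor>r\<rfloor> - k .. \<lfloor>r\<rfloor> + k}"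
proof -
  have "a - k \<le> \<lfloor>r\<rfloor>" unfolding le_floor_iff using assms by simp
  moreover have "\<lfloor>r\<rfloor> \<le> a + k" unfolding floor_le_iff using assms by simp
  ultimately show ?thesis by simp
qed

definition golden_floor :: "nat \<Rightarrow> nat \<Rightarrow> int" where
  "golden_floor c m = \<lfloor>real c / \<phi> ^ m\<rfloor>"

definition state_box :: "nat \<Rightarrow> nat \<Rightarrow> (int \<times> int) set" where
  "state_box c m = {golden_floor c m - 9 .. golden_floor c m + 9} \<times>
     {golden_floor c (m + 1) - 3 .. golden_floor c (m + 1) + 3}"

(* 3 > 1 / ln \<phi>, so that \<phi> ^ box_depth c > c *)
definition box_depth :: "nat \<Rightarrow> nat" where
  "box_depth c = nat \<lceil>3 * ln (real c + 1)\<rceil>"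

definition state_space :: "nat \<Rightarrow> (int \<times> int) set" where
  "state_space c = (\<Union>m\<le>box_depth c. state_box c m)"

lemma mem_state_box:
  "\<bar>real c / \<phi> ^ m - a\<bar> < 9 \<Longrightarrow> \<bar>real c / \<phi> ^ (m + 1) - u\<bar> < 3 \<Longrightarrow>
    (a, u) \<in> state_box c m"
  unfolding state_box_def golden_floor_def
  using mem_floor_interval[of _ a 9] mem_floor_interval[of _ u 3] by simp

lemma box_depth_bounds:
  "3 * ln (real c + 1) \<le> real (box_depth c)" "real (box_depth c) < 3 * ln (real c + 1) + 1"
proof -
  have "0 \<le> 3 * ln (real c + 1)" by simp
  then show "real (box_depth c) < 3 * ln (real c + 1) + 1"
    unfolding box_depth_def using ceiling_correct[of "3 * ln (real c + 1)"] by simp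
qed (simp add: box_depth_def real_nat_ceiling_ge)

lemma exp_one_third_less_golden_ratio: "exp (1/3) < \<phi>"
proof (rule power_less_imp_less_base)
  have "exp (1/3::real) ^ 3 = exp 1"
    by (simp flip: exp_of_nat_mult)
  also have "\<dots> < 1.6 ^ 3"
    by (rule le_less_trans[OF exp_le]) (simp add: power3_eq_cube)
  also have "\<dots> < \<phi> ^ 3"
    using golden_ratio_bounds by (intro power_strict_mono) auto
  finally show "exp (1/3) ^ 3 < \<phi> ^ 3" .
qed (use golden_ratio_bounds in simp)

lemma golden_ratio_pow_box_depth: "real c < \<phi> ^ box_depth c"
proof -
  have "ln (real c + 1) \<le> real (box_depth c) * (1/3)"
    using box_depth_bounds(1)[of c] by simp
  then have "exp (ln (real c + 1)) \<le> exp (real (box_depth c) * (1/3))"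
    by (simp only: exp_le_cancel_iff)
  then have "real c < exp (real (box_depth c) * (1/3))"
    by simp
  also have "\<dots> = exp (1/3) ^ box_depth c"
    by (rule exp_of_nat_mult)
  also have "\<dots> \<le> \<phi> ^ box_depth c"
    using exp_one_third_less_golden_ratio by (intro power_mono) auto
  finally show ?thesis .
qed

lemma golden_floor_eq_0:
  assumes "box_depth c \<le> m"
  shows "golden_floor c m = 0"
proof -
  have "\<phi> ^ box_depth c \<le> \<phi> ^ m"
    using assms golden_ratio_bounds by (intro power_increasing) auto
  then have "real c < \<phi> ^ m"
    using golden_ratio_pow_box_depth[of c] by simp
  then show ?thesis
    using golden_ratio_bounds unfolding golden_floor_def floor_eq_iff by (simp add: field_simps)
qed

lemma state_box_subset_state_space: "state_box c m \<subseteq> state_space c"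
proof (cases "m \<le> box_depth c")
  case False
  then have "state_box c m = state_box c (box_depth c)"
    unfolding state_box_def by (simp add: golden_floor_eq_0)
  then show ?thesis unfolding state_space_def by auto
qed (auto simp: state_space_def)

lemma finite_state_space: "finite (state_space c)"
  unfolding state_space_def state_box_def by auto

lemma zero_mem_state_space: "(0, 0) \<in> state_space c"
proof -
  have "(0, 0) \<in> state_box c (box_depth c)"
    unfolding state_box_def by (simp add: golden_floor_eq_0)
  then show ?thesis using state_box_subset_state_space by blast
qed

lemma card_state_space: "real (card (state_space c)) \<le> 1064 * max 1 (ln (real c))"
proof -
  have "ln (real c + 1) \<le> 2 * max 1 (ln (real c))"
  proof (cases "c = 0")
    case False
    then have "ln (real c + 1) \<le> ln (2 * real c)"
      by simp
    also have "\<dots> = ln 2 + ln (real c)"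
      using False by (simp add: ln_mult_pos)
    also have "\<dots> \<le> 2 * max 1 (ln (real c))"
      using ln_2_less_1 by linarith
    finally show ?thesis .
  qed simp
  then have depth: "real (box_depth c) \<le> 6 * max 1 (ln (real c)) + 1"
    using box_depth_bounds(2)[of c] by linarith
  have "card (state_space c) \<le> (\<Sum>m\<le>box_depth c. card (state_box c m))"
    unfolding state_space_def by (rule card_UN_le) simp
  then have "real (card (state_space c)) \<le> 133 * (real (box_depth c) + 1)"
    by (simp add: state_box_def card_cartesian_product)
  also have "\<dots> \<le> 133 * (6 * max 1 (ln (real c)) + 2)"
    using depth by simp
  also have "\<dots> \<le> 1064 * max 1 (ln (real c))"
    by simp
  finally show ?thesis .
qed

lemma fib_diff_state_mem_state_space:
  assumes len: "length p = length q" "length w = length w'"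
    and valid: "valid_fib w" "valid_fib w'"
    and diff: "int (fibval (p @ w)) - int c = int (fibval (q @ w'))"
  shows "foldl fib_diff_step (0, 0) (zip p q) \<in> state_space c"
proof -
  define m where "m = length w"
  define a u where "a = int (fibval p) - int (fibval q)" "u = int (fibval_shift p) - int (fibval_shift q)"
  have defect: "\<bar>a - \<phi> * u\<bar> < 2 * \<phi>"
    using golden_ratio_defect[of p] golden_ratio_defect[of q] unfolding a_u_def
    by (simp add: abs_less_iff right_diff_distrib)
  have "int c - (a * fib (m + 1) + u * fib m) = int (fibval w) - int (fibval w')"
    using diff len unfolding a_u_def m_def fibval_append by (simp add: algebra_simps)
  then have "real c - (a * fib (m + 1) + u * fib m) = real (fibval w) - real (fibval w')"
    by (metis of_int_add of_int_diff of_int_mult of_int_of_nat_eq)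
  moreover have "fibval w < fib (m + 2)" "fibval w' < fib (m + 2)"
    using fibval_less_fib[OF valid(1)] fibval_less_fib[OF valid(2)] len unfolding m_def by simp_all
  ultimately have rest: "\<bar>real c - (a * fib (m + 1) + u * fib m)\<bar> < fib (m + 2)"
    by simp
  have "(a, u) \<in> state_box c m"
    using golden_ratio_pow_approx[OF defect rest] by (intro mem_state_box)
  then show ?thesis
    using state_box_subset_state_space foldl_fib_diff_step[OF len(1)] unfolding a_u_def by auto
qed

definition fib_diff_dfa :: "nat \<Rightarrow> dfa" where
  "fib_diff_dfa c = restricted_dfa (state_space c) (0, 0) fib_diff_step (\<lambda>s. fst s = int c)"

lemma wf_fib_diff_dfa: "wf_dfa (fib_diff_dfa c)"
  unfolding fib_diff_dfa_def using finite_state_space zero_mem_state_space by (rule wf_restricted_dfa)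

lemma card_states_fib_diff_dfa: "real (card (states (fib_diff_dfa c))) \<le> 1064 * max 1 (ln (real c))"
  using card_states_restricted_dfa[OF finite_state_space] card_state_space[of c]
  unfolding fib_diff_dfa_def by (meson of_nat_le_iff order_trans)

lemma accepts_fib_diff_dfa:
  assumes valid: "valid_fib x" "valid_fib y" and len: "length x = length y"
  shows "accepts (fib_diff_dfa c) (zip x y) \<longleftrightarrow> int (fibval x) - int c = int (fibval y)"
proof -
  have "foldl fib_diff_step (0, 0) (take i (zip x y)) \<in> state_space c"
    if "int (fibval x) - int c = int (fibval y)" for i
    using fib_diff_state_mem_state_space[of "take i x" "take i y" "drop i x" "drop i y"]
      valid_fib_drop[OF valid(1)] valid_fib_drop[OF valid(2)] len that
    by (simp add: take_zip)
  then show ?thesis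
    using foldl_fib_diff_step[OF len]
    unfolding fib_diff_dfa_def accepts_restricted_dfa[OF zero_mem_state_space] by auto
qed

theorem theorem6:
  shows "\<exists>K::real. \<forall>c::nat. \<exists>A. wf_dfa A \<and>
           real (card (states A)) \<le> K * max 1 (ln (real c)) \<and>
           (\<forall>x y. valid_fib x \<longrightarrow> valid_fib y \<longrightarrow> length x = length y \<longrightarrow>
              (accepts A (zip x y) \<longleftrightarrow> int (fibval x) - int c = int (fibval y)))"
  using wf_fib_diff_dfa card_states_fib_diff_dfa accepts_fib_diff_dfa by blast

end
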